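(* Let $a,k,d,e,f$ be integers with $1\le a\le k$, $1\le d\le k$, $1\le f\le d$, and $e=d$ or $2e=d$. Then for all integers $m,n\ge0$, $${}_db_{dk+e,\,da+f}(m,n)-{}_db_{dk+e,\,da+f-1}(m,n)=\begin{cases}{}_d\overline{b}_{dk+e,\,dk-da+d}\big(m-(da+f-1),\,n-m\big)&\text{if } f\le e,\\ {}_d\overline{b}_{dk+e,\,dk-da}\big(m-(da+f-1),\,n-m\big)&\text{if } f>e.\end{cases}$$
   Context: Partitions are finite non-increasing sequences of positive integers; $\phi_i$ is the number of occurrences of $i$ as a part. For an integer $N$ and integers $m,n$, ${}_db_{dk+e,N}(m,n)$ is the number of partitions of $n$ into exactly $m$ parts with $\phi_i+\phi_{i+1}<dk+e$ for all $i\ge1$, $\phi_1<N$, and $d\mid\phi_{2i}$ for all $i\ge1$; ${}_d\overline{b}_{dk+e,N}(m,n)$ is the number of partitions of $n$ into exactly $m$ parts with $\phi_i+\phi_{i+1}<dk+e$ for all $i\ge1$, $\phi_1<N$, and $d\mid\phi_{2i+1}$ for all $i\ge0$. Both counts are $0$ when $m<0$ or $n<0$. *)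

theory Defs
  imports Main
begin

text \<open>Partitions of n into exactly m parts, as non-increasing lists of positive integers.
  The multiplicity phi_i of i in xs is count_list xs i.\<close>
definition part_set :: "nat \<Rightarrow> nat \<Rightarrow> nat list set" where
  "part_set m n = {xs. sorted_wrt (\<ge>) xs \<and> (\<forall>x\<in>set xs. 0 < x) \<and> length xs = m \<and> sum_list xs = n}"

definition db :: "int \<Rightarrow> int \<Rightarrow> int \<Rightarrow> int \<Rightarrow> int \<Rightarrow> int" where
  "db d K N m n = (if m < 0 \<or> n < 0 then 0 else
     int (card {xs \<in> part_set (nat m) (nat n).
        (\<forall>i\<ge>1. int (count_list xs i + count_list xs (i+1)) < K) \<and>
        int (count_list xs 1) < N \<and>
        (\<forall>i\<ge>1. d dvd int (count_list xs (2*i)))}))"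

definition dbbar :: "int \<Rightarrow> int \<Rightarrow> int \<Rightarrow> int \<Rightarrow> int \<Rightarrow> int" where
  "dbbar d K N m n = (if m < 0 \<or> n < 0 then 0 else
     int (card {xs \<in> part_set (nat m) (nat n).
        (\<forall>i\<ge>1. int (count_list xs i + count_list xs (i+1)) < K) \<and>
        int (count_list xs 1) < N \<and>
        (\<forall>i. d dvd int (count_list xs (2*i+1)))}))"

end

theory Submission
  imports Defs
begin

text \<open>A partition counted by db with exactly c ones is obtained from a partition ys of n - m
  into m - c parts by raising every part by one and appending c ones. This turns phi_{i+1} into
  phi_i of ys, so "d divides the even multiplicities" becomes "d divides the odd ones", the
  adjacent-sum bounds are inherited, and the only new bound is c + phi_1(ys) < dk + e.
  The difference db(N) - db(N - 1) counts exactly the partitions with phi_1 = N - 1, and as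
  phi_1(ys) is a multiple of d, the bound c + phi_1(ys) < dk + e rounds to phi_1(ys) < dk - da + d
  or to phi_1(ys) < dk - da according as f \<le> e or f > e.\<close>

definition adjacent_mults_bounded :: "int \<Rightarrow> nat list \<Rightarrow> bool" where
  "adjacent_mults_bounded K xs \<longleftrightarrow> (\<forall>i\<ge>1. int (count_list xs i + count_list xs (i+1)) < K)"

definition even_mults_dvd :: "int \<Rightarrow> nat list \<Rightarrow> bool" where
  "even_mults_dvd d xs \<longleftrightarrow> (\<forall>i\<ge>1. d dvd int (count_list xs (2*i)))"

definition odd_mults_dvd :: "int \<Rightarrow> nat list \<Rightarrow> bool" where
  "odd_mults_dvd d xs \<longleftrightarrow> (\<forall>i. d dvd int (count_list xs (2*i+1)))"

definition attach_ones :: "nat \<Rightarrow> nat list \<Rightarrow> nat list" where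
  "attach_ones c ys = map Suc ys @ replicate c 1"

definition strip_ones :: "nat list \<Rightarrow> nat list" where
  "strip_ones xs = map (\<lambda>x. x - 1) (filter (\<lambda>x. x \<noteq> 1) xs)"

lemma all_ge_1_iff_all_Suc: "(\<forall>i\<ge>1. P i) \<longleftrightarrow> (\<forall>j. P (Suc j))"
  by (metis One_nat_def Suc_le_D le_add1 plus_1_eq_Suc)

lemma all_nat_iff_zero_and_Suc: "(\<forall>j. P j) \<longleftrightarrow> P 0 \<and> (\<forall>j. P (Suc j))"
  by (metis not0_implies_Suc)

lemma length_le_sum_list: "\<forall>x\<in>set xs. 0 < x \<Longrightarrow> length xs \<le> sum_list (xs :: nat list)"
  by (induction xs) auto

lemma part_set_length_le_sum: "xs \<in> part_set m n \<Longrightarrow> m \<le> n"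
  unfolding part_set_def using length_le_sum_list by blast

lemma finite_part_set: "finite (part_set m n)"
proof -
  have "part_set m n \<subseteq> {xs. set xs \<subseteq> {..n} \<and> length xs = m}"
    unfolding part_set_def using member_le_sum_list by fastforce
  then show ?thesis
    using finite_lists_length_eq[of "{..n}" m] finite_subset by blast
qed

lemma count_list_map_Suc: "count_list (map Suc ys) (Suc j) = count_list ys j"
  by (induction ys) auto

lemma count_list_attach_ones:
  "count_list (attach_ones c ys) (Suc j) = count_list ys j + (if j = 0 then c else 0)"
proof -
  have "count_list (replicate c (Suc 0)) (Suc j) = (if j = 0 then c else 0)"
    by (induction c) auto
  then show ?thesis by (simp add: attach_ones_def count_list_map_Suc)
qed

lemma strip_ones_attach_ones:
  assumes "\<forall>y\<in>set ys. 0 < y"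
  shows "strip_ones (attach_ones c ys) = ys"
proof -
  have "filter (\<lambda>x. x \<noteq> 1) (map Suc ys) = map Suc ys"
    using assms by (induction ys) auto
  then show ?thesis by (simp add: strip_ones_def attach_ones_def comp_def)
qed

lemma sorted_desc_split_ones:
  assumes "sorted_wrt (\<ge>) xs" "\<forall>x\<in>set xs. (0::nat) < x"
  shows "xs = filter (\<lambda>x. x \<noteq> 1) xs @ replicate (count_list xs 1) 1"
  using assms
proof (induction xs)
  case (Cons x xs)
  show ?case
  proof (cases "x = 1")
    case True
    with Cons.prems have "\<forall>y\<in>set xs. y = 1" by fastforce
    then have "filter (\<lambda>x. x \<noteq> 1) xs = []" by (simp add: filter_empty_conv)
    with Cons True show ?thesis by auto
  qed (use Cons in auto)
qed simp

lemma attach_ones_strip_ones: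
  assumes "sorted_wrt (\<ge>) xs" "\<forall>x\<in>set xs. 0 < x"
  shows "attach_ones (count_list xs 1) (strip_ones xs) = xs"
proof -
  have "map Suc (strip_ones xs) = filter (\<lambda>x. x \<noteq> 1) xs"
    using assms(2) unfolding strip_ones_def by (induction xs) auto
  then show ?thesis
    using sorted_desc_split_ones[OF assms] by (simp add: attach_ones_def)
qed

lemma attach_ones_in_part_set_iff:
  assumes "\<forall>y\<in>set ys. 0 < y" "c \<le> m" "m \<le> n"
  shows "attach_ones c ys \<in> part_set m n \<longleftrightarrow> ys \<in> part_set (m - c) (n - m)"
proof -
  have "sorted_wrt (\<ge>) (replicate c (1::nat))"
    by (induction c) auto
  with assms(1) have "sorted_wrt (\<ge>) (attach_ones c ys) \<longleftrightarrow> sorted_wrt (\<ge>) ys"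
    by (auto simp: attach_ones_def sorted_wrt_append sorted_wrt_map)
  moreover have "sum_list (map Suc ys) = sum_list ys + length ys"
    by (induction ys) auto
  then have "sum_list (attach_ones c ys) = sum_list ys + length ys + c"
    by (simp add: attach_ones_def sum_list_replicate)
  moreover have "length (attach_ones c ys) = length ys + c" "\<forall>x\<in>set (attach_ones c ys). 0 < x"
    by (auto simp: attach_ones_def)
  ultimately show ?thesis
    using assms unfolding part_set_def by auto
qed

lemma adjacent_mults_bounded_attach_ones_iff:
  assumes "count_list ys 0 = 0"
  shows "adjacent_mults_bounded K (attach_ones c ys)
    \<longleftrightarrow> adjacent_mults_bounded K ys \<and> int c + int (count_list ys 1) < K"
proof -
  have "adjacent_mults_bounded K (attach_ones c ys)
      \<longleftrightarrow> (\<forall>j. int (count_list ys j + (if j = 0 then c else 0) + count_list ys (Suc j)) < K)"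
    unfolding adjacent_mults_bounded_def all_ge_1_iff_all_Suc
    by (simp add: count_list_attach_ones)
  also have "\<dots> \<longleftrightarrow> int c + int (count_list ys 1) < K
      \<and> (\<forall>j. int (count_list ys (Suc j) + count_list ys (Suc (Suc j))) < K)"
    by (subst all_nat_iff_zero_and_Suc) (simp add: assms)
  also have "\<dots> \<longleftrightarrow> int c + int (count_list ys 1) < K \<and> adjacent_mults_bounded K ys"
    unfolding adjacent_mults_bounded_def all_ge_1_iff_all_Suc by simp
  finally show ?thesis by blast
qed

lemma count_list_attach_ones_1: "count_list (attach_ones c ys) 1 = c + count_list ys 0"
  using count_list_attach_ones[of c ys 0] by simp

lemma even_mults_dvd_attach_ones_iff:
  "even_mults_dvd d (attach_ones c ys) \<longleftrightarrow> odd_mults_dvd d ys"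
  unfolding even_mults_dvd_def odd_mults_dvd_def all_ge_1_iff_all_Suc
  by (simp add: count_list_attach_ones)

lemma card_exactly_c_ones:
  assumes "c \<le> m" "m \<le> n"
  shows "card {xs \<in> part_set m n. adjacent_mults_bounded K xs \<and> count_list xs 1 = c
                                  \<and> even_mults_dvd d xs}
       = card {ys \<in> part_set (m - c) (n - m). adjacent_mults_bounded K ys
                    \<and> int c + int (count_list ys 1) < K \<and> odd_mults_dvd d ys}"
    (is "card ?S = card ?T")
proof -
  have pos: "\<forall>y\<in>set ys. 0 < y" "count_list ys 0 = 0" if "ys \<in> part_set p q" for ys p q
    using that by (auto simp: part_set_def count_list_0_iff)
  note transfer = attach_ones_in_part_set_iff[OF _ assms]
    adjacent_mults_bounded_attach_ones_iff even_mults_dvd_attach_ones_iff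
    count_list_attach_ones_1
  have "bij_betw strip_ones ?S ?T"
  proof (rule bij_betw_byWitness[where f' = "attach_ones c"])
    show "\<forall>xs\<in>?S. attach_ones c (strip_ones xs) = xs"
      using attach_ones_strip_ones by (auto simp: part_set_def)
    show "\<forall>ys\<in>?T. strip_ones (attach_ones c ys) = ys"
      using strip_ones_attach_ones pos by blast
    show "attach_ones c ` ?T \<subseteq> ?S"
      using pos transfer by auto
    show "strip_ones ` ?S \<subseteq> ?T"
    proof
      fix ys assume "ys \<in> strip_ones ` ?S"
      then obtain xs where xs: "xs \<in> ?S" "ys = strip_ones xs" by blast
      then have "attach_ones c ys = xs"
        using attach_ones_strip_ones by (auto simp: part_set_def)
      moreover have "\<forall>y\<in>set ys. 0 < y"
        using xs unfolding strip_ones_def part_set_def by fastforce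
      moreover from this have "count_list ys 0 = 0"
        by (auto simp: count_list_0_iff)
      ultimately show "ys \<in> ?T"
        using xs(1) transfer by auto
    qed
  qed
  then show ?thesis by (rule bij_betw_same_card)
qed

lemma db_diff_eq_card_exactly_ones:
  "db d K (int c + 1) (int m) (int n) - db d K (int c) (int m) (int n)
     = int (card {xs \<in> part_set m n. adjacent_mults_bounded K xs \<and> count_list xs 1 = c
                                    \<and> even_mults_dvd d xs})"
proof -
  let ?P = "\<lambda>M. {xs \<in> part_set m n. adjacent_mults_bounded K xs \<and> int (count_list xs 1) < M
                                    \<and> even_mults_dvd d xs}"
  let ?S = "{xs \<in> part_set m n. adjacent_mults_bounded K xs \<and> count_list xs 1 = c
                               \<and> even_mults_dvd d xs}"
  have split: "?P (int c + 1) = ?P (int c) \<union> ?S"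
    by auto
  have "card (?P (int c) \<union> ?S) = card (?P (int c)) + card ?S"
    by (rule card_Un_disjoint) (use finite_part_set in auto)
  then have "card (?P (int c + 1)) = card (?P (int c)) + card ?S"
    unfolding split .
  then show ?thesis
    unfolding db_def adjacent_mults_bounded_def even_mults_dvd_def by simp
qed

lemma card_exactly_ones_eq_dbbar:
  assumes threshold: "\<And>x. d dvd x \<Longrightarrow> int c + x < K \<longleftrightarrow> x < N'"
  shows "int (card {xs \<in> part_set m n. adjacent_mults_bounded K xs \<and> count_list xs 1 = c
                                     \<and> even_mults_dvd d xs})
       = dbbar d K N' (int m - int c) (int n - int m)"
    (is "int (card ?S) = _")
proof (cases "c \<le> m \<and> m \<le> n")
  case True
  have "{ys \<in> part_set (m - c) (n - m). adjacent_mults_bounded K ys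
            \<and> int c + int (count_list ys 1) < K \<and> odd_mults_dvd d ys}
      = {ys \<in> part_set (m - c) (n - m). adjacent_mults_bounded K ys
            \<and> int (count_list ys 1) < N' \<and> odd_mults_dvd d ys}"
    using threshold unfolding odd_mults_dvd_def by (metis (no_types, lifting) add_0 mult_0_right)
  moreover have "nat (int m - int c) = m - c" "nat (int n - int m) = n - m"
    using True by auto
  ultimately show ?thesis
    using True card_exactly_c_ones[of c m n K d]
    unfolding dbbar_def adjacent_mults_bounded_def odd_mults_dvd_def by simp
next
  case False
  then have "?S = {}"
    using part_set_length_le_sum count_le_length by (fastforce simp: part_set_def)
  moreover have "dbbar d K N' (int m - int c) (int n - int m) = 0"
    using False by (auto simp: dbbar_def)
  ultimately show ?thesis by (simp only: card.empty of_nat_0)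
qed

theorem db_diff_eq_dbbar:
  fixes N N' K d m n :: int
  assumes "1 \<le> N" "0 \<le> m" "0 \<le> n"
    and "\<And>x. d dvd x \<Longrightarrow> N - 1 + x < K \<longleftrightarrow> x < N'"
  shows "db d K N m n - db d K (N - 1) m n = dbbar d K N' (m - (N - 1)) (n - m)"
proof -
  obtain m' n' c :: nat where "m = int m'" "n = int n'" "N = int c + 1"
    using assms(1-3) by (metis add.commute diff_add_cancel diff_ge_0_iff_ge nonneg_eq_int)
  then show ?thesis
    using db_diff_eq_card_exactly_ones card_exactly_ones_eq_dbbar assms(4) by simp
qed

lemma dvd_less_add_iff:
  fixes d t x r :: int
  assumes "d dvd x" "d dvd t" "0 < r" "r \<le> d"
  shows "x < t + r \<longleftrightarrow> x < t + d"
proof -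
  have "d dvd x - t" using assms(1,2) by simp
  then have "0 < x - t \<Longrightarrow> d \<le> x - t" by (rule zdvd_imp_le)
  with assms(3,4) show ?thesis by linarith
qed

theorem mainTheorem4:
  fixes a k d e f m n :: int
  assumes "1 \<le> a" "a \<le> k" "1 \<le> d" "d \<le> k" "1 \<le> f" "f \<le> d"
    and "e = d \<or> 2 * e = d"
    and "0 \<le> m" "0 \<le> n"
  shows "db d (d*k+e) (d*a+f) m n - db d (d*k+e) (d*a+f-1) m n =
    (if f \<le> e then dbbar d (d*k+e) (d*k-d*a+d) (m-(d*a+f-1)) (n-m)
     else dbbar d (d*k+e) (d*k-d*a) (m-(d*a+f-1)) (n-m))"
proof -
  define N' where "N' = (if f \<le> e then d*k-d*a+d else d*k-d*a)"
  have e: "1 \<le> e" "e \<le> d" using assms(3,7) by auto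
  have "d dvd d*k-d*a" "d dvd d*k-d*a-d" by simp_all
  then have "d*a+f-1 + x < d*k+e \<longleftrightarrow> x < N'" if "d dvd x" for x
    using that e assms(5,6) dvd_less_add_iff[of d x "d*k-d*a" "e-f+1"]
      dvd_less_add_iff[of d x "d*k-d*a-d" "e-f+1+d"]
    unfolding N'_def by (auto simp: algebra_simps)
  moreover have "1 \<le> d*a+f" using assms(1,3,5) by (simp add: add_increasing)
  ultimately have "db d (d*k+e) (d*a+f) m n - db d (d*k+e) (d*a+f-1) m n
      = dbbar d (d*k+e) N' (m-(d*a+f-1)) (n-m)"
    using db_diff_eq_dbbar assms(8,9) by (metis (no_types, lifting) add_diff_eq)
  then show ?thesis by (simp add: N'_def)
qed

end
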